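(* Let $(\Sigma,E)$ be an algebraic theory and let $(T,\eta,\mu)=(T_{\Sigma,E},\eta_{\Sigma,E},\mu_{\Sigma,E})$ be its free monad on $\mathbf{Set}$. Then the algebraic theory $(\Sigma^{\mathrm{s}},E^{\mathrm{s}})$ is an algebraic presentation of the semifree monad $(T^{\mathrm{s}},\eta^{\mathrm{s}},\mu^{\mathrm{s}})$ on $T$, i.e. the monad $T_{\Sigma^{\mathrm{s}},E^{\mathrm{s}}}$ is isomorphic (as a monad) to $T^{\mathrm{s}}$.
   Context: An algebraic signature $\Sigma$ is a set of operation symbols, each with an arity $n\in\mathbb{N}$ (written $(\mathsf{op}:n)$). $\mathrm{Var}=\{v_1,v_2,\dots\}$ is a fixed set of variables; an equation is a pair of $\Sigma$-terms over $\mathrm{Var}$; an algebraic theory $(\Sigma,E)$ is a signature with a set $E$ of equations. The free monad $T_{\Sigma,E}$ of $(\Sigma,E)$ sends a set $X$ to the set of $\Sigma$-terms over $X$ modulo the smallest congruence containing all substitution instances of equations of $E$; its unit sends $x$ to the class $\overline{x}$, and its multiplication flattens terms: $\overline{t[\overline{t_i}/v_i]}\mapsto\overline{t[t_i/v_i]}$. An algebraic theory $(\Sigma',E')$ is an algebraic presentation of a $\mathbf{Set}$-monad $M$ if $T_{\Sigma',E'}\cong M$ as monads. For a monad $(M,\eta,\mu)$ on a category with finite coproducts, the semifree monad is $M^{\mathrm{s}}=\mathrm{Id}+M$ with unit $\eta^{\mathrm{s}}=\mathrm{inl}$ and multiplication $\mu^{\mathrm{s}}=[\mathrm{id}_{\mathrm{Id}+M},\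 \mathrm{inr}\circ\mu\circ M[\eta,\mathrm{id}_M]]$. Given $(\Sigma,E)$, the theory $(\Sigma^{\mathrm{s}},E^{\mathrm{s}})$ has signature $\Sigma^{\mathrm{s}}=\Sigma\uplus\{\mathsf{a}:1\}$ and equations $E^{\mathrm{s}}$ consisting of: $\mathsf{a}\mathsf{a}v_1=\mathsf{a}v_1$; $\mathsf{a}(\mathsf{op}(v_1,\dots,v_n))=\mathsf{op}(v_1,\dots,v_n)$ and $\mathsf{op}(\mathsf{a}v_1,\dots,\mathsf{a}v_n)=\mathsf{op}(v_1,\dots,v_n)$ for every $(\mathsf{op}:n)\in\Sigma$; and $t(\mathsf{a}v_1,\dots,\mathsf{a}v_n)=s(\mathsf{a}v_1,\dots,\mathsf{a}v_n)$ for every equation $t(v_1,\dots,v_n)=s(v_1,\dots,v_n)$ in $E$. *)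

theory Defs
  imports Main
begin

datatype ('f, 'v) trm = Var 'v | Op 'f "('f, 'v) trm list"

primrec subst :: "('v \<Rightarrow> ('f, 'w) trm) \<Rightarrow> ('f, 'v) trm \<Rightarrow> ('f, 'w) trm" where
  "subst \<sigma> (Var x) = \<sigma> x"
| "subst \<sigma> (Op f ts) = Op f (map (subst \<sigma>) ts)"

inductive_set terms :: "'f set \<Rightarrow> ('f \<Rightarrow> nat) \<Rightarrow> 'v set \<Rightarrow> ('f, 'v) trm set"
  for Sig ar V where
  var: "x \<in> V \<Longrightarrow> Var x \<in> terms Sig ar V"
| op: "f \<in> Sig \<Longrightarrow> length ts = ar f \<Longrightarrow> (\<forall>t \<in> set ts. t \<in> terms Sig ar V) \<Longrightarrow> Op f ts \<in> terms Sig ar V"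

text \<open>Equations are pairs of terms over Var = nat (v_1, v_2, ... are 0, 1, ...).\<close>

definition is_theory :: "'f set \<Rightarrow> ('f \<Rightarrow> nat) \<Rightarrow> (('f, nat) trm \<times> ('f, nat) trm) set \<Rightarrow> bool" where
  "is_theory Sig ar E \<longleftrightarrow> (\<forall>(l, r) \<in> E. l \<in> terms Sig ar UNIV \<and> r \<in> terms Sig ar UNIV)"

inductive eqv :: "'f set \<Rightarrow> ('f \<Rightarrow> nat) \<Rightarrow> (('f, nat) trm \<times> ('f, nat) trm) set \<Rightarrow> 'v set
                  \<Rightarrow> ('f, 'v) trm \<Rightarrow> ('f, 'v) trm \<Rightarrow> bool"
  for Sig ar E V where
  refl: "t \<in> terms Sig ar V \<Longrightarrow> eqv Sig ar E V t t"
| sym: "eqv Sig ar E V s t \<Longrightarrow> eqv Sig ar E V t s"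
| trans: "eqv Sig ar E V s t \<Longrightarrow> eqv Sig ar E V t u \<Longrightarrow> eqv Sig ar E V s u"
| cong: "f \<in> Sig \<Longrightarrow> length ts = ar f \<Longrightarrow> list_all2 (eqv Sig ar E V) ts us
          \<Longrightarrow> eqv Sig ar E V (Op f ts) (Op f us)"
| ax: "(l, r) \<in> E \<Longrightarrow> (\<forall>i. \<sigma> i \<in> terms Sig ar V)
          \<Longrightarrow> eqv Sig ar E V (subst \<sigma> l) (subst \<sigma> r)"

section \<open>The free monad T_{Sig,E} (on sets V, represented as subsets of types)\<close>

definition cls :: "'f set \<Rightarrow> ('f \<Rightarrow> nat) \<Rightarrow> (('f, nat) trm \<times> ('f, nat) trm) set \<Rightarrow> 'v set
                   \<Rightarrow> ('f, 'v) trm \<Rightarrow> ('f, 'v) trm set" where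
  "cls Sig ar E V t = {s. eqv Sig ar E V t s}"

definition Tc :: "'f set \<Rightarrow> ('f \<Rightarrow> nat) \<Rightarrow> (('f, nat) trm \<times> ('f, nat) trm) set \<Rightarrow> 'v set
                  \<Rightarrow> ('f, 'v) trm set set" where
  "Tc Sig ar E V = cls Sig ar E V ` terms Sig ar V"

definition Tmap :: "'f set \<Rightarrow> ('f \<Rightarrow> nat) \<Rightarrow> (('f, nat) trm \<times> ('f, nat) trm) set \<Rightarrow> 'w set
                    \<Rightarrow> ('v \<Rightarrow> 'w) \<Rightarrow> ('f, 'v) trm set \<Rightarrow> ('f, 'w) trm set" where
  "Tmap Sig ar E W f C = {s. \<exists>t \<in> C. eqv Sig ar E W (map_trm id f t) s}"

definition Tunit :: "'f set \<Rightarrow> ('f \<Rightarrow> nat) \<Rightarrow> (('f, nat) trm \<times> ('f, nat) trm) set \<Rightarrow> 'v set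
                     \<Rightarrow> 'v \<Rightarrow> ('f, 'v) trm set" where
  "Tunit Sig ar E V x = cls Sig ar E V (Var x)"

definition Tmult :: "'f set \<Rightarrow> ('f \<Rightarrow> nat) \<Rightarrow> (('f, nat) trm \<times> ('f, nat) trm) set \<Rightarrow> 'v set
                     \<Rightarrow> ('f, ('f, 'v) trm set) trm set \<Rightarrow> ('f, 'v) trm set" where
  "Tmult Sig ar E V C = {s. \<exists>t \<in> C. \<exists>\<sigma>. (\<forall>c \<in> Tc Sig ar E V. \<sigma> c \<in> c)
                                  \<and> eqv Sig ar E V (subst \<sigma> t) s}"

definition SFc :: "'f set \<Rightarrow> ('f \<Rightarrow> nat) \<Rightarrow> (('f, nat) trm \<times> ('f, nat) trm) set \<Rightarrow> 'v set
                   \<Rightarrow> ('v + ('f, 'v) trm set) set" where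
  "SFc Sig ar E V = Inl ` V \<union> Inr ` Tc Sig ar E V"

definition SFmap :: "'f set \<Rightarrow> ('f \<Rightarrow> nat) \<Rightarrow> (('f, nat) trm \<times> ('f, nat) trm) set \<Rightarrow> 'w set
                     \<Rightarrow> ('v \<Rightarrow> 'w) \<Rightarrow> 'v + ('f, 'v) trm set \<Rightarrow> 'w + ('f, 'w) trm set" where
  "SFmap Sig ar E W f = map_sum f (Tmap Sig ar E W f)"

definition SFunit :: "'v \<Rightarrow> 'v + ('f, 'v) trm set" where
  "SFunit = Inl"

definition SFmult :: "'f set \<Rightarrow> ('f \<Rightarrow> nat) \<Rightarrow> (('f, nat) trm \<times> ('f, nat) trm) set \<Rightarrow> 'v set
     \<Rightarrow> ('v + ('f, 'v) trm set) + ('f, 'v + ('f, 'v) trm set) trm set \<Rightarrow> 'v + ('f, 'v) trm set" where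
  "SFmult Sig ar E V = case_sum id
     (\<lambda>C. Inr (Tmult Sig ar E V (Tmap Sig ar E (Tc Sig ar E V) (case_sum (Tunit Sig ar E V) id) C)))"

text \<open>Sig^s = Sig \<uplus> {a : 1}: Some f for f in Sig, None for the new unary symbol a.\<close>
definition sigS :: "'f set \<Rightarrow> 'f option set" where
  "sigS Sig = insert None (Some ` Sig)"

definition arS :: "('f \<Rightarrow> nat) \<Rightarrow> 'f option \<Rightarrow> nat" where
  "arS ar g = (case g of None \<Rightarrow> 1 | Some f \<Rightarrow> ar f)"

definition aop :: "('f option, 'v) trm \<Rightarrow> ('f option, 'v) trm" where
  "aop t = Op None [t]"

definition eqS :: "'f set \<Rightarrow> ('f \<Rightarrow> nat) \<Rightarrow> (('f, nat) trm \<times> ('f, nat) trm) set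
                   \<Rightarrow> (('f option, nat) trm \<times> ('f option, nat) trm) set" where
  "eqS Sig ar E =
     {(aop (aop (Var 0)), aop (Var 0))}
   \<union> {(aop (Op (Some f) (map Var [0..<ar f])), Op (Some f) (map Var [0..<ar f])) | f. f \<in> Sig}
   \<union> {(Op (Some f) (map (\<lambda>i. aop (Var i)) [0..<ar f]), Op (Some f) (map Var [0..<ar f])) | f. f \<in> Sig}
   \<union> {(subst (\<lambda>i. aop (Var i)) (map_trm Some id l), subst (\<lambda>i. aop (Var i)) (map_trm Some id r))
        | l r. (l, r) \<in> E}"

primrec strip :: "('f option, 'v) trm \<Rightarrow> ('f, 'v) trm" where
  "strip (Var x) = Var x"
| "strip (Op g ts) = (case g of
      None \<Rightarrow> (case map strip ts of [u] \<Rightarrow> u | _ \<Rightarrow> undefined)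
    | Some f \<Rightarrow> Op f (map strip ts))"

definition phi :: "'f set \<Rightarrow> ('f \<Rightarrow> nat) \<Rightarrow> (('f, nat) trm \<times> ('f, nat) trm) set \<Rightarrow> 'v set
                   \<Rightarrow> ('f option, 'v) trm set \<Rightarrow> 'v + ('f, 'v) trm set" where
  "phi Sig ar E V C = (let t = (SOME t. t \<in> C) in
      (case t of Var x \<Rightarrow> Inl x | Op _ _ \<Rightarrow> Inr (cls Sig ar E V (strip t))))"

end

theory Submission
  imports Defs
begin

text \<open>No equation of E^s has a variable as a side, so a variable is provably equal only to
  itself and the classes of variables form a copy of V. Erasing the symbol a (strip) turns
  E^s-derivations into E-derivations. Conversely, the equations of E^s let a non-variable term
  absorb an a and push it down to the variables, so t = guard_vars (strip t), where guard_vars u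
  is u(a v_1, ..., a v_n). Hence on classes of non-variable terms strip and guard_vars are mutually
  inverse, which makes phi a bijection onto V + T(V); compatibility with the functor action, the
  unit and the multiplication is then a computation on representatives.\<close>

section \<open>Equational logic over a signature\<close>

declare eqv.trans [trans]

lemma subst_in_terms:
  "t \<in> terms Sig ar U \<Longrightarrow> (\<And>x. x \<in> U \<Longrightarrow> \<sigma> x \<in> terms Sig ar V) \<Longrightarrow> subst \<sigma> t \<in> terms Sig ar V"
  by (induction t rule: terms.induct) (auto intro!: terms.intros)

lemma subst_subst: "subst \<sigma> (subst \<tau> t) = subst (\<lambda>x. subst \<sigma> (\<tau> x)) t"
  by (induction t) auto

lemma subst_Var: "subst Var t = t"
  by (induction t) (auto intro: map_idI)

lemma map_trm_eq_subst: "map_trm id f t = subst (\<lambda>x. Var (f x)) t"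
  by (induction t) auto

lemma map_trm_in_terms:
  "t \<in> terms Sig ar V \<Longrightarrow> (\<And>x. x \<in> V \<Longrightarrow> f x \<in> W) \<Longrightarrow> map_trm id f t \<in> terms Sig ar W"
  unfolding map_trm_eq_subst by (auto intro: subst_in_terms terms.var)

lemma Var_in_termsD: "Var x \<in> terms Sig ar V \<Longrightarrow> x \<in> V"
  by (erule terms.cases) auto

lemma eqv_in_terms:
  assumes "eqv Sig ar E V s t" "is_theory Sig ar E"
  shows "s \<in> terms Sig ar V \<and> t \<in> terms Sig ar V"
  using assms
proof (induction rule: eqv.induct)
  case (cong f ts us)
  then show ?case
    by (auto simp: list_all2_conv_all_nth in_set_conv_nth intro!: terms.op)
next
  case (ax l r \<sigma>)
  then show ?case unfolding is_theory_def by (auto intro!: subst_in_terms)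
qed auto

lemma eqv_subst:
  assumes "eqv Sig ar E U s t" "\<And>x. x \<in> U \<Longrightarrow> \<sigma> x \<in> terms Sig ar V"
  shows "eqv Sig ar E V (subst \<sigma> s) (subst \<sigma> t)"
  using assms
proof (induction rule: eqv.induct)
  case (refl t)
  then show ?case by (auto intro!: eqv.refl subst_in_terms)
next
  case (cong f ts us)
  then show ?case by (auto simp: list_all2_conv_all_nth intro!: eqv.cong)
next
  case (ax l r \<tau>)
  then have "eqv Sig ar E V (subst (\<lambda>x. subst \<sigma> (\<tau> x)) l) (subst (\<lambda>x. subst \<sigma> (\<tau> x)) r)"
    by (auto intro!: eqv.ax subst_in_terms)
  then show ?case by (simp add: subst_subst)
qed (auto intro: eqv.sym eqv.trans)

lemma eqv_subst_cong:
  "t \<in> terms Sig ar U \<Longrightarrow> (\<And>x. x \<in> U \<Longrightarrow> eqv Sig ar E V (\<sigma> x) (\<sigma>' x))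
   \<Longrightarrow> eqv Sig ar E V (subst \<sigma> t) (subst \<sigma>' t)"
  by (induction t rule: terms.induct) (auto simp: list_all2_conv_all_nth intro!: eqv.cong)

lemma eqv_Var_iff:
  assumes "eqv Sig ar E V s t" "\<And>l r. (l, r) \<in> E \<Longrightarrow> l \<notin> range Var \<and> r \<notin> range Var"
  shows "s = Var x \<longleftrightarrow> t = Var x"
  using assms
proof (induction rule: eqv.induct)
  case (ax l r \<sigma>)
  then have "l \<notin> range Var" "r \<notin> range Var" by blast+
  then show ?case by (cases l; cases r) auto
qed auto

lemma cls_eqI: "eqv Sig ar E V s t \<Longrightarrow> cls Sig ar E V s = cls Sig ar E V t"
  unfolding cls_def by (auto intro: eqv.trans eqv.sym)

lemma cls_eq_iff: "t \<in> terms Sig ar V \<Longrightarrow> cls Sig ar E V s = cls Sig ar E V t \<longleftrightarrow> eqv Sig ar E V s t"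
  unfolding cls_def by (auto intro: eqv.refl eqv.trans eqv.sym)

lemma in_cls: "t \<in> terms Sig ar V \<Longrightarrow> t \<in> cls Sig ar E V t"
  unfolding cls_def by (auto intro: eqv.refl)

abbreviation rep :: "'a set \<Rightarrow> 'a" where
  "rep c \<equiv> SOME s. s \<in> c"

lemma eqv_rep_cls: "t \<in> terms Sig ar V \<Longrightarrow> eqv Sig ar E V t (rep (cls Sig ar E V t))"
  using someI[of "\<lambda>s. s \<in> cls Sig ar E V t", OF in_cls] unfolding cls_def by simp

lemma rep_in_Tc: "c \<in> Tc Sig ar E V \<Longrightarrow> rep c \<in> c"
  unfolding Tc_def by (auto intro: someI in_cls)

lemma cls_rep: "c \<in> Tc Sig ar E V \<Longrightarrow> cls Sig ar E V (rep c) = c"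
  unfolding Tc_def by (auto intro!: cls_eqI[symmetric] eqv_rep_cls)

lemma Tc_eqv: "c \<in> Tc Sig ar E V \<Longrightarrow> s \<in> c \<Longrightarrow> s' \<in> c \<Longrightarrow> eqv Sig ar E V s s'"
  unfolding Tc_def cls_def by (auto intro: eqv.trans[OF eqv.sym])

lemma Tc_in_terms: "c \<in> Tc Sig ar E V \<Longrightarrow> s \<in> c \<Longrightarrow> is_theory Sig ar E \<Longrightarrow> s \<in> terms Sig ar V"
  using Tc_eqv[of c Sig ar E V s s] eqv_in_terms by meson

lemma rep_in_terms: "c \<in> Tc Sig ar E V \<Longrightarrow> is_theory Sig ar E \<Longrightarrow> rep c \<in> terms Sig ar V"
  using Tc_in_terms rep_in_Tc by blast

lemma Tmap_cls:
  assumes "t \<in> terms Sig ar V" "\<And>x. x \<in> V \<Longrightarrow> f x \<in> W"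
  shows "Tmap Sig ar E W f (cls Sig ar E V t) = cls Sig ar E W (map_trm id f t)"
proof -
  have "eqv Sig ar E W (map_trm id f t) s"
    if "eqv Sig ar E V t t'" "eqv Sig ar E W (map_trm id f t') s" for t' s
    using eqv_subst[OF that(1), of "\<lambda>x. Var (f x)"] assms(2) eqv.trans[OF _ that(2)]
    by (auto simp: map_trm_eq_subst intro: terms.var)
  then show ?thesis
    using in_cls[OF assms(1), of E] unfolding Tmap_def cls_def by blast
qed

lemma Tmult_cls:
  assumes "t \<in> terms Sig ar (Tc Sig ar E V)" "is_theory Sig ar E"
  shows "Tmult Sig ar E V (cls Sig ar E (Tc Sig ar E V) t) = cls Sig ar E V (subst rep t)"
proof -
  have "eqv Sig ar E V (subst rep t) s"
    if \<sigma>: "\<forall>c \<in> Tc Sig ar E V. \<sigma> c \<in> c" and t': "eqv Sig ar E (Tc Sig ar E V) t t'"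
      and s: "eqv Sig ar E V (subst \<sigma> t') s" for \<sigma> t' s
  proof -
    have "eqv Sig ar E V (subst rep t) (subst \<sigma> t)"
      by (rule eqv_subst_cong[OF assms(1)]) (simp add: \<sigma> rep_in_Tc Tc_eqv)
    also have "eqv Sig ar E V (subst \<sigma> t) (subst \<sigma> t')"
      by (rule eqv_subst[OF t']) (simp add: \<sigma> Tc_in_terms assms(2))
    finally show ?thesis
      using s by (rule eqv.trans)
  qed
  moreover have "\<exists>t' \<in> cls Sig ar E (Tc Sig ar E V) t. \<exists>\<sigma>. (\<forall>c \<in> Tc Sig ar E V. \<sigma> c \<in> c)
      \<and> eqv Sig ar E V (subst \<sigma> t') s" if "eqv Sig ar E V (subst rep t) s" for s
    using that by (intro bexI[OF _ in_cls[OF assms(1)]] exI[of _ rep]) (simp add: rep_in_Tc)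
  ultimately show ?thesis
    unfolding Tmult_def cls_def by auto
qed

section \<open>The theory (Sig^s, E^s)\<close>

primrec guard_vars :: "('f, 'v) trm \<Rightarrow> ('f option, 'v) trm" where
  "guard_vars (Var x) = aop (Var x)"
| "guard_vars (Op f us) = Op (Some f) (map guard_vars us)"

lemma guard_vars_eq_subst: "guard_vars u = subst (\<lambda>i. aop (Var i)) (map_trm Some id u)"
  by (induction u) auto

lemma guard_vars_subst: "guard_vars (subst \<sigma> u) = subst (\<lambda>x. guard_vars (\<sigma> x)) (map_trm Some id u)"
  by (induction u) auto

lemma guard_vars_not_Var [simp]: "guard_vars u \<noteq> Var x"
  by (cases u) (auto simp: aop_def)

lemma strip_subst_guard_vars: "strip (subst \<sigma> (guard_vars u)) = subst (\<lambda>x. strip (\<sigma> x)) u"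
  by (induction u) (auto simp: aop_def)

lemma strip_guard_vars: "strip (guard_vars u) = u"
  using strip_subst_guard_vars[of Var u] by (simp add: subst_Var)

context
  fixes Sig :: "'f set" and ar :: "'f \<Rightarrow> nat" and E :: "(('f, nat) trm \<times> ('f, nat) trm) set"
begin

abbreviation "termsS \<equiv> terms (sigS Sig) (arS ar)"
abbreviation "eqvS \<equiv> eqv (sigS Sig) (arS ar) (eqS Sig ar E)"
abbreviation "clsS \<equiv> cls (sigS Sig) (arS ar) (eqS Sig ar E)"
abbreviation "TcS \<equiv> Tc (sigS Sig) (arS ar) (eqS Sig ar E)"

lemma Op_Some_in_termsS:
  "f \<in> Sig \<Longrightarrow> length ts = ar f \<Longrightarrow> (\<And>t. t \<in> set ts \<Longrightarrow> t \<in> termsS V) \<Longrightarrow> Op (Some f) ts \<in> termsS V"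
  by (auto simp: sigS_def arS_def intro!: terms.op)

lemma aop_in_termsS: "t \<in> termsS V \<Longrightarrow> aop t \<in> termsS V"
  by (auto simp: aop_def sigS_def arS_def intro!: terms.op)

lemma lift_in_termsS: "u \<in> terms Sig ar V \<Longrightarrow> map_trm Some id u \<in> termsS V"
  by (induction u rule: terms.induct) (auto intro!: terms.var Op_Some_in_termsS)

lemma guard_vars_in_termsS: "u \<in> terms Sig ar V \<Longrightarrow> guard_vars u \<in> termsS V"
  by (induction u rule: terms.induct) (auto intro!: terms.var aop_in_termsS Op_Some_in_termsS)

lemma termsS_cases:
  assumes "t \<in> termsS V"
  obtains (Var) x where "t = Var x" "x \<in> V"
  | (aop) u where "t = aop u" "u \<in> termsS V"
  | (Op) f ts where "t = Op (Some f) ts" "f \<in> Sig" "length ts = ar f" "\<forall>u \<in> set ts. u \<in> termsS V"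
  using assms
  by (cases rule: terms.cases) (auto simp: sigS_def arS_def aop_def length_Suc_conv)

lemma strip_in_terms: "t \<in> termsS V \<Longrightarrow> strip t \<in> terms Sig ar V"
  by (induction t rule: terms.induct)
    (auto simp: sigS_def arS_def length_Suc_conv intro: terms.var intro!: terms.op split: option.split)

lemma strip_subst: "t \<in> termsS U \<Longrightarrow> strip (subst \<sigma> t) = subst (\<lambda>x. strip (\<sigma> x)) (strip t)"
  by (induction t rule: terms.induct) (auto simp: sigS_def arS_def length_Suc_conv)

lemma is_theory_eqS: "is_theory Sig ar E \<Longrightarrow> is_theory (sigS Sig) (arS ar) (eqS Sig ar E)"
  unfolding is_theory_def eqS_def guard_vars_eq_subst[symmetric]
  by (auto intro!: terms.var aop_in_termsS Op_Some_in_termsS guard_vars_in_termsS)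

lemma eqS_sides_not_Var: "(l, r) \<in> eqS Sig ar E \<Longrightarrow> l \<notin> range Var \<and> r \<notin> range Var"
  unfolding eqS_def guard_vars_eq_subst[symmetric] by (auto simp: aop_def)

lemma eqv_strip: "eqvS V s t \<Longrightarrow> eqv Sig ar E V (strip s) (strip t)"
proof (induction rule: eqv.induct)
  case (refl t)
  then show ?case by (intro eqv.refl strip_in_terms)
next
  case (cong g ts us)
  show ?case
  proof (cases g)
    case None
    with cong show ?thesis by (auto simp: arS_def length_Suc_conv list_all2_Cons1)
  next
    case (Some f)
    with cong show ?thesis by (auto simp: sigS_def arS_def list_all2_conv_all_nth intro!: eqv.cong)
  qed
next
  case (ax l r \<sigma>)
  have \<sigma>: "\<forall>i. strip (\<sigma> i) \<in> terms Sig ar V"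
    using ax.hyps(2) strip_in_terms by blast
  from ax.hyps(1) consider
      (idem) "l = aop (aop (Var 0))" "r = aop (Var 0)"
    | (absorb) f where "f \<in> Sig" "l = aop (Op (Some f) (map Var [0..<ar f]))"
        "r = Op (Some f) (map Var [0..<ar f])"
    | (args) f where "f \<in> Sig" "l = Op (Some f) (map (\<lambda>i. aop (Var i)) [0..<ar f])"
        "r = Op (Some f) (map Var [0..<ar f])"
    | (from_E) l0 r0 where "(l0, r0) \<in> E" "l = guard_vars l0" "r = guard_vars r0"
    unfolding eqS_def guard_vars_eq_subst[symmetric] by blast
  then show ?case
  proof cases
    case from_E
    then show ?thesis using eqv.ax[OF _ \<sigma>] by (simp add: strip_subst_guard_vars)
  qed (auto simp: aop_def comp_def intro!: eqv.refl terms.op \<sigma>[rule_format])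
qed (auto intro: eqv.sym eqv.trans)

lemma eqvS_aop_aop: "t \<in> termsS V \<Longrightarrow> eqvS V (aop (aop t)) (aop t)"
proof -
  assume "t \<in> termsS V"
  moreover have "(aop (aop (Var 0)), aop (Var 0)) \<in> eqS Sig ar E"
    unfolding eqS_def by blast
  ultimately show ?thesis
    using eqv.ax[where \<sigma> = "\<lambda>_. t"] by (fastforce simp: aop_def)
qed

lemma args_eq_map_subst:
  assumes "f \<in> Sig" "length ts = ar f" "\<forall>t \<in> set ts. t \<in> termsS V"
  obtains \<sigma> where "\<forall>i. \<sigma> i \<in> termsS V" "map \<sigma> [0..<ar f] = ts"
proof
  \<comment> \<open>the default value Op (Some f) ts keeps the substitution well-formed even when V is empty\<close>
  show "\<forall>i. (if i < length ts then ts ! i else Op (Some f) ts) \<in> termsS V"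
    using assms by (auto intro: Op_Some_in_termsS)
  show "map (\<lambda>i. if i < length ts then ts ! i else Op (Some f) ts) [0..<ar f] = ts"
    using assms(2) by (auto intro: nth_equalityI)
qed

lemma eqvS_aop_Op:
  assumes "f \<in> Sig" "length ts = ar f" "\<forall>t \<in> set ts. t \<in> termsS V"
  shows "eqvS V (aop (Op (Some f) ts)) (Op (Some f) ts)"
proof -
  obtain \<sigma> where \<sigma>: "\<forall>i. \<sigma> i \<in> termsS V" and ts: "map \<sigma> [0..<ar f] = ts"
    using args_eq_map_subst[OF assms] .
  have "(aop (Op (Some f) (map Var [0..<ar f])), Op (Some f) (map Var [0..<ar f])) \<in> eqS Sig ar E"
    unfolding eqS_def using assms(1) by blast
  from eqv.ax[OF this \<sigma>] show ?thesis
    by (simp add: aop_def comp_def ts)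
qed

lemma eqvS_Op_map_aop:
  assumes "f \<in> Sig" "length ts = ar f" "\<forall>t \<in> set ts. t \<in> termsS V"
  shows "eqvS V (Op (Some f) (map aop ts)) (Op (Some f) ts)"
proof -
  obtain \<sigma> where \<sigma>: "\<forall>i. \<sigma> i \<in> termsS V" and ts: "map \<sigma> [0..<ar f] = ts"
    using args_eq_map_subst[OF assms] .
  have "(Op (Some f) (map (\<lambda>i. aop (Var i)) [0..<ar f]), Op (Some f) (map Var [0..<ar f]))
      \<in> eqS Sig ar E"
    unfolding eqS_def using assms(1) by blast
  from eqv.ax[OF this \<sigma>] have "eqvS V (Op (Some f) (map (\<lambda>i. aop (\<sigma> i)) [0..<ar f])) (Op (Some f) ts)"
    by (simp add: aop_def comp_def ts)
  then show ?thesis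
    by (simp add: ts[symmetric] comp_def)
qed

lemma eqvS_aop_guard_vars: "u \<in> terms Sig ar V \<Longrightarrow> eqvS V (aop (guard_vars u)) (guard_vars u)"
  by (erule terms.cases) (auto intro!: eqvS_aop_aop eqvS_aop_Op terms.var guard_vars_in_termsS)

lemma eqvS_guard_vars:
  assumes "is_theory Sig ar E" "eqv Sig ar E V u u'"
  shows "eqvS V (guard_vars u) (guard_vars u')"
  using assms(2)
proof (induction rule: eqv.induct)
  case (refl t)
  then show ?case by (intro eqv.refl guard_vars_in_termsS)
next
  case (cong f ts us)
  then show ?case
    by (auto simp: sigS_def arS_def list_all2_conv_all_nth intro!: eqv.cong)
next
  case (ax l r \<sigma>)
  let ?\<tau> = "\<lambda>i. guard_vars (\<sigma> i)"
  have \<tau>: "\<forall>i. ?\<tau> i \<in> termsS V"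
    using ax.hyps(2) by (simp add: guard_vars_in_termsS)
  \<comment> \<open>the two sides differ only by doubled a's above the substituted terms\<close>
  have lift_eqv: "eqvS V (guard_vars (subst \<sigma> u)) (subst ?\<tau> (guard_vars u))"
    if "u \<in> terms Sig ar UNIV" for u
  proof -
    have "eqvS V (subst ?\<tau> (map_trm Some id u)) (subst (\<lambda>i. aop (?\<tau> i)) (map_trm Some id u))"
      using ax.hyps(2) eqvS_aop_guard_vars
      by (intro eqv_subst_cong[OF lift_in_termsS[OF that]]) (blast intro: eqv.sym)
    then show ?thesis
      by (simp add: guard_vars_subst guard_vars_eq_subst[of u] subst_subst aop_def)
  qed
  have "(guard_vars l, guard_vars r) \<in> eqS Sig ar E"
    using ax.hyps(1) unfolding eqS_def guard_vars_eq_subst by blast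
  then have "eqvS V (subst ?\<tau> (guard_vars l)) (subst ?\<tau> (guard_vars r))"
    using \<tau> by (rule eqv.ax)
  moreover have "l \<in> terms Sig ar UNIV" "r \<in> terms Sig ar UNIV"
    using ax.hyps(1) assms(1) unfolding is_theory_def by auto
  ultimately show ?case
    using lift_eqv eqv.sym eqv.trans by metis
qed (auto intro: eqv.sym eqv.trans)

lemma eqvS_aop_guard_vars_strip: "t \<in> termsS V \<Longrightarrow> eqvS V (aop t) (guard_vars (strip t))"
proof (induction t rule: terms.induct)
  case (var x)
  then show ?case by (auto intro: eqv.refl aop_in_termsS terms.var)
next
  case (op g ts)
  show ?case
  proof (cases g)
    case None
    then obtain u where u: "ts = [u]" "u \<in> termsS V" "eqvS V (aop u) (guard_vars (strip u))"
      using op by (auto simp: arS_def length_Suc_conv)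
    have "eqvS V (aop (aop u)) (aop u)"
      using u(2) by (rule eqvS_aop_aop)
    also have "eqvS V (aop u) (guard_vars (strip u))"
      using u(3) .
    finally show ?thesis
      using None u(1) by (simp add: aop_def)
  next
    case (Some f)
    then have f: "f \<in> Sig" "length ts = ar f"
      using op by (auto simp: sigS_def arS_def)
    have ts: "\<forall>t \<in> set ts. t \<in> termsS V"
      using op by blast
    have "eqvS V (aop (Op (Some f) ts)) (Op (Some f) ts)"
      using f ts by (rule eqvS_aop_Op)
    also have "eqvS V (Op (Some f) ts) (Op (Some f) (map aop ts))"
      using eqvS_Op_map_aop[OF f ts] by (rule eqv.sym)
    also have "eqvS V (Op (Some f) (map aop ts)) (Op (Some f) (map (\<lambda>t. guard_vars (strip t)) ts))"
    proof (rule eqv.cong)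
      show "Some f \<in> sigS Sig" "length (map aop ts) = arS ar (Some f)"
        using f by (simp_all add: sigS_def arS_def)
      show "list_all2 (eqvS V) (map aop ts) (map (\<lambda>t. guard_vars (strip t)) ts)"
        using op.IH by (simp add: list_all2_conv_all_nth)
    qed
    finally show ?thesis
      using Some by (simp add: comp_def)
  qed
qed

lemma eqvS_aop:
  assumes "t \<in> termsS V" "t \<notin> range Var"
  shows "eqvS V t (aop t)"
  using assms(1)
proof (cases rule: termsS_cases)
  case (aop u)
  then show ?thesis using eqvS_aop_aop eqv.sym by blast
next
  case (Op f ts)
  then show ?thesis using eqvS_aop_Op eqv.sym by blast
qed (use assms(2) in auto)

lemma eqvS_guard_vars_strip:
  "t \<in> termsS V \<Longrightarrow> t \<notin> range Var \<Longrightarrow> eqvS V t (guard_vars (strip t))"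
  using eqvS_aop eqvS_aop_guard_vars_strip eqv.trans by blast

lemma eqvS_iff_eqv_strip:
  assumes "is_theory Sig ar E" "s \<in> termsS V" "t \<in> termsS V" "s \<notin> range Var" "t \<notin> range Var"
  shows "eqvS V s t \<longleftrightarrow> eqv Sig ar E V (strip s) (strip t)"
proof
  assume "eqv Sig ar E V (strip s) (strip t)"
  then have "eqvS V (guard_vars (strip s)) (guard_vars (strip t))"
    using assms(1) eqvS_guard_vars by blast
  then show "eqvS V s t"
    using eqvS_guard_vars_strip assms(2-5) eqv.sym eqv.trans by metis
qed (rule eqv_strip)

section \<open>The comparison map\<close>

lemma phi_cls:
  assumes "t \<in> termsS V"
  shows "phi Sig ar E V (clsS V t)
    = (case t of Var x \<Rightarrow> Inl x | Op _ _ \<Rightarrow> Inr (cls Sig ar E V (strip t)))"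
proof -
  have rep: "eqvS V t (rep (clsS V t))"
    using assms by (rule eqv_rep_cls)
  then have same_Var: "t = Var x \<longleftrightarrow> rep (clsS V t) = Var x" for x
    using eqS_sides_not_Var by (rule eqv_Var_iff)
  show ?thesis
  proof (cases t)
    case (Var x)
    then show ?thesis
      using same_Var[of x] by (simp add: phi_def)
  next
    case (Op g ts)
    then obtain g' ts' where "rep (clsS V t) = Op g' ts'"
      using same_Var by (cases "rep (clsS V t)") auto
    moreover have "cls Sig ar E V (strip (rep (clsS V t))) = cls Sig ar E V (strip t)"
      using cls_eqI[OF eqv.sym[OF eqv_strip[OF rep]]] .
    ultimately show ?thesis
      using Op by (simp add: phi_def)
  qed
qed

lemma phi_cls_Var: "x \<in> V \<Longrightarrow> phi Sig ar E V (clsS V (Var x)) = Inl x"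
  by (simp add: phi_cls terms.var)

lemma phi_cls_not_Var:
  "t \<in> termsS V \<Longrightarrow> t \<notin> range Var \<Longrightarrow> phi Sig ar E V (clsS V t) = Inr (cls Sig ar E V (strip t))"
  by (cases t) (auto simp: phi_cls)

lemma phi_in_SFc:
  assumes "C \<in> TcS V"
  shows "phi Sig ar E V C \<in> SFc Sig ar E V"
proof -
  obtain t where t: "t \<in> termsS V" "C = clsS V t"
    using assms unfolding Tc_def by auto
  show ?thesis
  proof (cases t)
    case (Var x)
    then show ?thesis
      using t Var_in_termsD[of x "sigS Sig" "arS ar" V] by (simp add: phi_cls SFc_def)
  next
    case (Op g ts)
    moreover have "cls Sig ar E V (strip t) \<in> Tc Sig ar E V"
      unfolding Tc_def using t(1) by (intro imageI strip_in_terms)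
    ultimately show ?thesis
      using t by (simp add: phi_cls SFc_def)
  qed
qed

lemma isl_phi_cls: "t \<in> termsS V \<Longrightarrow> isl (phi Sig ar E V (clsS V t)) \<longleftrightarrow> t \<in> range Var"
  by (cases t) (auto simp: phi_cls)

lemma inj_on_phi:
  assumes "is_theory Sig ar E"
  shows "inj_on (phi Sig ar E V) (TcS V)"
proof (rule inj_onI)
  fix C1 C2
  assume "C1 \<in> TcS V" "C2 \<in> TcS V" and phi: "phi Sig ar E V C1 = phi Sig ar E V C2"
  then obtain t1 t2 where t: "t1 \<in> termsS V" "C1 = clsS V t1" "t2 \<in> termsS V" "C2 = clsS V t2"
    unfolding Tc_def by auto
  have same_kind: "t1 \<in> range Var \<longleftrightarrow> t2 \<in> range Var"
    using isl_phi_cls[OF t(1)] isl_phi_cls[OF t(3)] phi t(2,4) by simp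
  show "C1 = C2"
  proof (cases "t1 \<in> range Var")
    case True
    then obtain x y where "t1 = Var x" "t2 = Var y"
      using same_kind by auto
    then show ?thesis
      using phi t by (simp add: phi_cls)
  next
    case False
    then have "eqv Sig ar E V (strip t1) (strip t2)"
      using phi t same_kind by (simp add: phi_cls_not_Var cls_eq_iff strip_in_terms)
    then have "eqvS V t1 t2"
      using eqvS_iff_eqv_strip[OF assms t(1,3)] False same_kind by blast
    then show ?thesis
      using t by (simp add: cls_eqI)
  qed
qed

lemma SFc_subset_phi_image: "SFc Sig ar E V \<subseteq> phi Sig ar E V ` TcS V"
proof
  fix y
  assume "y \<in> SFc Sig ar E V"
  then consider x where "x \<in> V" "y = Inl x" | u where "u \<in> terms Sig ar V" "y = Inr (cls Sig ar E V u)"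
    unfolding SFc_def Tc_def by auto
  then show "y \<in> phi Sig ar E V ` TcS V"
  proof cases
    case 1
    then have "y = phi Sig ar E V (clsS V (Var x))"
      by (simp add: phi_cls_Var)
    then show ?thesis
      unfolding Tc_def by (rule image_eqI) (intro imageI terms.var 1(1))
  next
    case 2
    then have "y = phi Sig ar E V (clsS V (guard_vars u))"
      by (simp add: phi_cls_not_Var guard_vars_in_termsS strip_guard_vars image_iff)
    then show ?thesis
      unfolding Tc_def by (rule image_eqI) (intro imageI guard_vars_in_termsS 2(1))
  qed
qed

lemma bij_betw_phi: "is_theory Sig ar E \<Longrightarrow> bij_betw (phi Sig ar E V) (TcS V) (SFc Sig ar E V)"
  unfolding bij_betw_def
  using inj_on_phi phi_in_SFc SFc_subset_phi_image by blast

lemma strip_map_trm: "t \<in> termsS V \<Longrightarrow> strip (map_trm id f t) = map_trm id f (strip t)"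
  by (simp add: map_trm_eq_subst strip_subst)

lemma phi_Tmap:
  assumes f: "\<And>x. x \<in> V \<Longrightarrow> f x \<in> W" and C: "C \<in> TcS V"
  shows "phi Sig ar E W (Tmap (sigS Sig) (arS ar) (eqS Sig ar E) W f C)
    = SFmap Sig ar E W f (phi Sig ar E V C)"
proof -
  obtain t where t: "t \<in> termsS V" "C = clsS V t"
    using C unfolding Tc_def by auto
  have "Tmap (sigS Sig) (arS ar) (eqS Sig ar E) W f C = clsS W (map_trm id f t)"
    using Tmap_cls[OF t(1) f] t(2) by simp
  moreover have "map_trm id f t \<in> termsS W"
    using t(1) f by (rule map_trm_in_terms)
  moreover have "Tmap Sig ar E W f (cls Sig ar E V (strip t)) = cls Sig ar E W (map_trm id f (strip t))"
    using Tmap_cls[OF strip_in_terms[OF t(1)] f] .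
  moreover have "t \<notin> range Var \<Longrightarrow> map_trm id f t \<notin> range Var"
    by (cases t) auto
  ultimately show ?thesis
    using t f Var_in_termsD[of _ "sigS Sig" "arS ar" V]
    by (cases "t \<in> range Var") (auto simp: phi_cls_Var phi_cls_not_Var SFmap_def strip_map_trm)
qed

lemma case_sum_Tunit_phi:
  assumes "is_theory Sig ar E" "c \<in> TcS V"
  shows "case_sum (Tunit Sig ar E V) id (phi Sig ar E V c) = cls Sig ar E V (strip (rep c))"
proof -
  have "phi Sig ar E V c = phi Sig ar E V (clsS V (rep c))"
    using assms(2) by (simp add: cls_rep)
  also have "\<dots> = (case rep c of Var x \<Rightarrow> Inl x | Op _ _ \<Rightarrow> Inr (cls Sig ar E V (strip (rep c))))"
    using rep_in_terms[OF assms(2) is_theory_eqS[OF assms(1)]] by (rule phi_cls)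
  finally show ?thesis
    by (cases "rep c") (simp_all add: Tunit_def)
qed

lemma SFmult_Inr_cls:
  assumes "is_theory Sig ar E" "u \<in> terms Sig ar (SFc Sig ar E V)"
  shows "SFmult Sig ar E V (Inr (cls Sig ar E (SFc Sig ar E V) u))
    = Inr (cls Sig ar E V (subst (\<lambda>y. rep (case_sum (Tunit Sig ar E V) id y)) u))"
proof -
  let ?g = "case_sum (Tunit Sig ar E V) id"
  have g: "?g y \<in> Tc Sig ar E V" if "y \<in> SFc Sig ar E V" for y
    using that unfolding SFc_def Tc_def Tunit_def by (auto intro: terms.var)
  have "map_trm id ?g u \<in> terms Sig ar (Tc Sig ar E V)"
    using assms(2) g by (rule map_trm_in_terms)
  then have "SFmult Sig ar E V (Inr (cls Sig ar E (SFc Sig ar E V) u))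
      = Inr (cls Sig ar E V (subst rep (map_trm id ?g u)))"
    by (simp add: SFmult_def Tmap_cls[OF assms(2) g] Tmult_cls[OF _ assms(1)])
  then show ?thesis
    by (simp add: map_trm_eq_subst subst_subst)
qed

lemma phi_Tmult_cls_not_Var:
  assumes th: "is_theory Sig ar E" and t: "t \<in> termsS (TcS V)" "t \<notin> range Var"
  shows "phi Sig ar E V (Tmult (sigS Sig) (arS ar) (eqS Sig ar E) V (clsS (TcS V) t))
    = Inr (cls Sig ar E V (subst (\<lambda>c. strip (rep c)) (strip t)))"
proof -
  have thS: "is_theory (sigS Sig) (arS ar) (eqS Sig ar E)"
    using th by (rule is_theory_eqS)
  have "subst rep t \<in> termsS V"
    using t(1) rep_in_terms[OF _ thS] by (rule subst_in_terms)
  moreover have "subst rep t \<notin> range Var"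
    using t(2) by (cases t) auto
  ultimately show ?thesis
    by (simp add: Tmult_cls[OF t(1) thS] phi_cls_not_Var strip_subst[OF t(1)])
qed

lemma SFmult_phi_Tmap_cls_not_Var:
  assumes th: "is_theory Sig ar E" and t: "t \<in> termsS (TcS V)" "t \<notin> range Var"
  shows "SFmult Sig ar E V (phi Sig ar E (SFc Sig ar E V)
      (Tmap (sigS Sig) (arS ar) (eqS Sig ar E) (SFc Sig ar E V) (phi Sig ar E V) (clsS (TcS V) t)))
    = Inr (cls Sig ar E V (subst (\<lambda>c. strip (rep c)) (strip t)))"
proof -
  let ?g = "case_sum (Tunit Sig ar E V) id"
  have "map_trm id (phi Sig ar E V) t \<in> termsS (SFc Sig ar E V)"
    using t(1) phi_in_SFc by (rule map_trm_in_terms)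
  moreover have "map_trm id (phi Sig ar E V) t \<notin> range Var"
    using t(2) by (cases t) auto
  moreover have "map_trm id (phi Sig ar E V) (strip t) \<in> terms Sig ar (SFc Sig ar E V)"
    using strip_in_terms[OF t(1)] phi_in_SFc by (rule map_trm_in_terms)
  ultimately have "SFmult Sig ar E V (phi Sig ar E (SFc Sig ar E V)
      (Tmap (sigS Sig) (arS ar) (eqS Sig ar E) (SFc Sig ar E V) (phi Sig ar E V) (clsS (TcS V) t)))
    = Inr (cls Sig ar E V (subst (\<lambda>y. rep (?g y)) (map_trm id (phi Sig ar E V) (strip t))))"
    by (simp add: Tmap_cls[OF t(1) phi_in_SFc] phi_cls_not_Var strip_map_trm[OF t(1)]
        SFmult_Inr_cls[OF th])
  also have "subst (\<lambda>y. rep (?g y)) (map_trm id (phi Sig ar E V) (strip t))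
      = subst (\<lambda>c. rep (?g (phi Sig ar E V c))) (strip t)"
    by (simp add: map_trm_eq_subst subst_subst)
  also have "cls Sig ar E V (subst (\<lambda>c. rep (?g (phi Sig ar E V c))) (strip t))
      = cls Sig ar E V (subst (\<lambda>c. strip (rep c)) (strip t))"
  proof (intro cls_eqI eqv_subst_cong[OF strip_in_terms[OF t(1)]])
    fix c
    assume c: "c \<in> TcS V"
    have "strip (rep c) \<in> terms Sig ar V"
      using rep_in_terms[OF c is_theory_eqS[OF th]] by (rule strip_in_terms)
    then show "eqv Sig ar E V (rep (?g (phi Sig ar E V c))) (strip (rep c))"
      unfolding case_sum_Tunit_phi[OF th c] by (rule eqv.sym[OF eqv_rep_cls])
  qed
  finally show ?thesis .
qed

lemma phi_Tmult:
  assumes th: "is_theory Sig ar E" and C: "C \<in> TcS (TcS V)"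
  shows "phi Sig ar E V (Tmult (sigS Sig) (arS ar) (eqS Sig ar E) V C)
    = SFmult Sig ar E V (phi Sig ar E (SFc Sig ar E V)
        (Tmap (sigS Sig) (arS ar) (eqS Sig ar E) (SFc Sig ar E V) (phi Sig ar E V) C))"
proof -
  obtain t where t: "t \<in> termsS (TcS V)" "C = clsS (TcS V) t"
    using C unfolding Tc_def by auto
  show ?thesis
  proof (cases "t \<in> range Var")
    case True
    then obtain c where "t = Var c"
      by auto
    with t(1) have c: "t = Var c" "c \<in> TcS V"
      using Var_in_termsD[of c "sigS Sig" "arS ar"] by auto
    have "Tmult (sigS Sig) (arS ar) (eqS Sig ar E) V C = c"
      using Tmult_cls[OF t(1) is_theory_eqS[OF th]] t(2) c by (simp add: cls_rep)
    moreover have "Tmap (sigS Sig) (arS ar) (eqS Sig ar E) (SFc Sig ar E V) (phi Sig ar E V) C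
        = clsS (SFc Sig ar E V) (Var (phi Sig ar E V c))"
      using Tmap_cls[OF t(1) phi_in_SFc] t(2) c(1) by simp
    ultimately show ?thesis
      using c(2) by (simp add: phi_cls_Var phi_in_SFc SFmult_def)
  next
    case False
    then show ?thesis
      using t by (simp add: phi_Tmult_cls_not_Var[OF th] SFmult_phi_Tmap_cls_not_Var[OF th])
  qed
qed

end

theorem theorem1:
  fixes Sig :: "'f set" and ar :: "'f \<Rightarrow> nat"
    and E :: "(('f, nat) trm \<times> ('f, nat) trm) set"
  assumes "is_theory Sig ar E"
  shows
    "(\<forall>V :: 'x set. bij_betw (phi Sig ar E V)
        (Tc (sigS Sig) (arS ar) (eqS Sig ar E) V) (SFc Sig ar E V))
  \<and>
    (\<forall>(V :: 'x set) (W :: 'y set) f. (\<forall>x \<in> V. f x \<in> W) \<longrightarrow>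
       (\<forall>C \<in> Tc (sigS Sig) (arS ar) (eqS Sig ar E) V.
          phi Sig ar E W (Tmap (sigS Sig) (arS ar) (eqS Sig ar E) W f C)
          = SFmap Sig ar E W f (phi Sig ar E V C)))
  \<and>
    (\<forall>(V :: 'x set). \<forall>x \<in> V.
       phi Sig ar E V (Tunit (sigS Sig) (arS ar) (eqS Sig ar E) V x) = SFunit x)
  \<and>
    (\<forall>(V :: 'x set).
       \<forall>C \<in> Tc (sigS Sig) (arS ar) (eqS Sig ar E) (Tc (sigS Sig) (arS ar) (eqS Sig ar E) V).
         phi Sig ar E V (Tmult (sigS Sig) (arS ar) (eqS Sig ar E) V C)
         = SFmult Sig ar E V
             (phi Sig ar E (SFc Sig ar E V)
               (Tmap (sigS Sig) (arS ar) (eqS Sig ar E) (SFc Sig ar E V) (phi Sig ar E V) C)))"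
  using assms
  by (simp add: bij_betw_phi phi_Tmap phi_cls_Var phi_Tmult Tunit_def SFunit_def)

end
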